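(* The logic $\mathsf{iCC}:=\mathsf{ICK}\oplus(p\mathrel{\Box\!\!\!\rightarrow} p)\oplus(((p\mathrel{\Box\!\!\!\rightarrow} q)\wedge((p\wedge q)\mathrel{\Box\!\!\!\rightarrow} r))\to(p\mathrel{\Box\!\!\!\rightarrow} r))\oplus(((p\mathrel{\Box\!\!\!\rightarrow} q)\wedge(p\mathrel{\Box\!\!\!\rightarrow} r))\to((p\wedge q)\mathrel{\Box\!\!\!\rightarrow} r))$ is sound and complete with respect to the class of cautious conditional frames.
   Context: Formulas: $\phi ::= p\mid\bot\mid\phi\wedge\phi\mid\phi\vee\phi\mid\phi\to\phi\mid\phi\mathrel{\Box\!\!\!\rightarrow}\phi$. $\mathsf{ICK}\oplus\Gamma$ is the smallest set containing intuitionistic propositional logic, $\Gamma$, $(p\mathrel{\Box\!\!\!\rightarrow}(q\wedge r))\leftrightarrow((p\mathrel{\Box\!\!\!\rightarrow} q)\wedge(p\mathrel{\Box\!\!\!\rightarrow} r))$ and $(p\mathrel{\Box\!\!\!\rightarrow}\top)\leftrightarrow\top$, closed under uniform substitution, modus ponens and congruence rules for both arguments of $\mathrel{\Box\!\!\!\rightarrow}$. A conditional frame is $(X,\leq,\mathcal{R})$, $(X,\leq)$ a nonempty preorder, $\mathcal{R}=\{R_a\mid a\text{ an upset}\}$ with $(\leq\circ R_a)\subseteq(R_a\circ\leq)$; valuations assign upsets to letters and $x\models\phi\mathrel{\Box\!\!\!\rightarrow}\psi$ iff every $y$ with $xR_{V(\phi)}y$ satisfies $\psi$. A cautious conditional frame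 is one satisfying, for all $x$ and upsets $a,b$: $R_a[x]\subseteq a$, and $R_a[x]\subseteq b\subseteq a$ implies ${\uparrow}R_a[x]={\uparrow}R_b[x]$. *)

theory Defs
  imports Main
begin

datatype form =
    Var nat
  | Bot
  | Conj form form
  | Disj form form
  | Imp form form
  | Cond form form

definition Top :: form where "Top = Imp Bot Bot"
definition Iff :: "form \<Rightarrow> form \<Rightarrow> form" where
  "Iff a b = Conj (Imp a b) (Imp b a)"

fun subst :: "(nat \<Rightarrow> form) \<Rightarrow> form \<Rightarrow> form" where
  "subst s (Var n) = s n"
| "subst s Bot = Bot"
| "subst s (Conj a b) = Conj (subst s a) (subst s b)"
| "subst s (Disj a b) = Disj (subst s a) (subst s b)"
| "subst s (Imp a b) = Imp (subst s a) (subst s b)"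
| "subst s (Cond a b) = Cond (subst s a) (subst s b)"

abbreviation "pp \<equiv> Var 0"
abbreviation "qq \<equiv> Var 1"
abbreviation "rr \<equiv> Var 2"

text \<open>A standard Hilbert axiomatisation of intuitionistic propositional logic
(with modus ponens and uniform substitution it generates IPL in the full language).\<close>
definition IPC_axioms :: "form set" where
  "IPC_axioms = {
     Imp pp (Imp qq pp),
     Imp (Imp pp (Imp qq rr)) (Imp (Imp pp qq) (Imp pp rr)),
     Imp (Conj pp qq) pp,
     Imp (Conj pp qq) qq,
     Imp pp (Imp qq (Conj pp qq)),
     Imp pp (Disj pp qq),
     Imp qq (Disj pp qq),
     Imp (Imp pp rr) (Imp (Imp qq rr) (Imp (Disj pp qq) rr)),
     Imp Bot pp }"

definition ICK_axioms :: "form set" where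
  "ICK_axioms = {
     Iff (Cond pp (Conj qq rr)) (Conj (Cond pp qq) (Cond pp rr)),
     Iff (Cond pp Top) Top }"

inductive_set ICK_ext :: "form set \<Rightarrow> form set" for \<Gamma> :: "form set" where
  ipc: "a \<in> IPC_axioms \<Longrightarrow> a \<in> ICK_ext \<Gamma>"
| gam: "a \<in> \<Gamma> \<Longrightarrow> a \<in> ICK_ext \<Gamma>"
| ick: "a \<in> ICK_axioms \<Longrightarrow> a \<in> ICK_ext \<Gamma>"
| sub: "a \<in> ICK_ext \<Gamma> \<Longrightarrow> subst s a \<in> ICK_ext \<Gamma>"
| mp: "Imp a b \<in> ICK_ext \<Gamma> \<Longrightarrow> a \<in> ICK_ext \<Gamma> \<Longrightarrow> b \<in> ICK_ext \<Gamma>"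
| congL: "Iff a b \<in> ICK_ext \<Gamma> \<Longrightarrow> Iff (Cond a c) (Cond b c) \<in> ICK_ext \<Gamma>"
| congR: "Iff a b \<in> ICK_ext \<Gamma> \<Longrightarrow> Iff (Cond c a) (Cond c b) \<in> ICK_ext \<Gamma>"

definition iCC :: "form set" where
  "iCC = ICK_ext {
     Cond pp pp,
     Imp (Conj (Cond pp qq) (Cond (Conj pp qq) rr)) (Cond pp rr),
     Imp (Conj (Cond pp qq) (Cond pp rr)) (Cond (Conj pp qq) rr) }"

text \<open>A frame is given by a carrier set W (a subset of the type 'w), a relation le
(a preorder on W), and a family R of relations indexed by sets; only R a for
upsets a of W matters.\<close>

definition upset :: "'w set \<Rightarrow> ('w \<Rightarrow> 'w \<Rightarrow> bool) \<Rightarrow> 'w set \<Rightarrow> bool" where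
  "upset W le a \<longleftrightarrow> a \<subseteq> W \<and> (\<forall>x\<in>a. \<forall>y\<in>W. le x y \<longrightarrow> y \<in> a)"

definition cond_frame :: "'w set \<Rightarrow> ('w \<Rightarrow> 'w \<Rightarrow> bool) \<Rightarrow> ('w set \<Rightarrow> 'w \<Rightarrow> 'w \<Rightarrow> bool) \<Rightarrow> bool" where
  "cond_frame W le R \<longleftrightarrow>
     W \<noteq> {} \<and>
     (\<forall>x\<in>W. le x x) \<and>
     (\<forall>x\<in>W. \<forall>y\<in>W. \<forall>z\<in>W. le x y \<longrightarrow> le y z \<longrightarrow> le x z) \<and>
     (\<forall>a. upset W le a \<longrightarrow>
        (\<forall>x y. R a x y \<longrightarrow> x \<in> W \<and> y \<in> W) \<and>
        (\<forall>x\<in>W. \<forall>x'\<in>W. \<forall>y\<in>W. le x x' \<longrightarrow> R a x' y \<longrightarrow>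
            (\<exists>y'\<in>W. R a x y' \<and> le y' y)))"

definition succs :: "('w \<Rightarrow> 'w \<Rightarrow> bool) \<Rightarrow> 'w \<Rightarrow> 'w set" where
  "succs S x = {y. S x y}"

definition up :: "'w set \<Rightarrow> ('w \<Rightarrow> 'w \<Rightarrow> bool) \<Rightarrow> 'w set \<Rightarrow> 'w set" where
  "up W le A = {y\<in>W. \<exists>x\<in>A. le x y}"

definition cautious_frame :: "'w set \<Rightarrow> ('w \<Rightarrow> 'w \<Rightarrow> bool) \<Rightarrow> ('w set \<Rightarrow> 'w \<Rightarrow> 'w \<Rightarrow> bool) \<Rightarrow> bool" where
  "cautious_frame W le R \<longleftrightarrow> cond_frame W le R \<and>
     (\<forall>x\<in>W. \<forall>a b. upset W le a \<longrightarrow> upset W le b \<longrightarrow>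
        succs (R a) x \<subseteq> a \<and>
        (succs (R a) x \<subseteq> b \<and> b \<subseteq> a \<longrightarrow>
           up W le (succs (R a) x) = up W le (succs (R b) x)))"

fun sat :: "'w set \<Rightarrow> ('w \<Rightarrow> 'w \<Rightarrow> bool) \<Rightarrow> ('w set \<Rightarrow> 'w \<Rightarrow> 'w \<Rightarrow> bool)
            \<Rightarrow> (nat \<Rightarrow> 'w set) \<Rightarrow> 'w \<Rightarrow> form \<Rightarrow> bool" where
  "sat W le R V x (Var n) \<longleftrightarrow> x \<in> V n"
| "sat W le R V x Bot \<longleftrightarrow> False"
| "sat W le R V x (Conj a b) \<longleftrightarrow> sat W le R V x a \<and> sat W le R V x b"
| "sat W le R V x (Disj a b) \<longleftrightarrow> sat W le R V x a \<or> sat W le R V x b"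
| "sat W le R V x (Imp a b) \<longleftrightarrow>
     (\<forall>y\<in>W. le x y \<longrightarrow> sat W le R V y a \<longrightarrow> sat W le R V y b)"
| "sat W le R V x (Cond a b) \<longleftrightarrow>
     (\<forall>y. R {z\<in>W. sat W le R V z a} x y \<longrightarrow> sat W le R V y b)"

definition valid_in :: "'w set \<Rightarrow> ('w \<Rightarrow> 'w \<Rightarrow> bool) \<Rightarrow> ('w set \<Rightarrow> 'w \<Rightarrow> 'w \<Rightarrow> bool) \<Rightarrow> form \<Rightarrow> bool" where
  "valid_in W le R \<phi> \<longleftrightarrow>
     (\<forall>V. (\<forall>n. upset W le (V n)) \<longrightarrow> (\<forall>x\<in>W. sat W le R V x \<phi>))"

end

theory Submission
  imports Defs
begin

text \<open>
  Soundness: truth sets are upsets by persistence, so substitution, modus ponens and both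
  congruence rules preserve validity on every conditional frame. In a cautious frame
  \<open>R\<^sub>a[x] \<subseteq> b \<subseteq> a\<close> makes \<open>R\<^sub>a[x]\<close> and \<open>R\<^sub>b[x]\<close> generate the same upset, so they force the
  same upsets; this validates cut and cautious monotonicity, and \<open>R\<^sub>a[x] \<subseteq> a\<close> validates
  \<open>p \<box>\<rightarrow> p\<close>.

  Completeness: take the prime theories ordered by inclusion. For a theory \<open>G\<close> and a formula
  \<open>f\<close> let \<open>G\<^sub>f\<close> be the prime theories containing every \<open>c\<close> with \<open>f \<box>\<rightarrow> c \<in> G\<close>. Call an
  upset \<open>a\<close> indexed by \<open>f\<close> at \<open>G\<close> if \<open>G\<^sub>f \<subseteq> a \<subseteq> [f]\<close>; cut and cautious monotonicity show
  that \<open>G\<^sub>f\<close> does not depend on the index. Let \<open>R\<^sub>a\<close> send \<open>G\<close> to \<open>G\<^sub>f\<close> if \<open>a\<close> has an index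
  \<open>f\<close>, and to \<open>a\<close> itself otherwise. This frame is cautious, \<open>[f]\<close> is indexed by \<open>f\<close>, and the
  truth lemma follows; Lindenbaum's lemma then refutes every non-theorem.
\<close>

section \<open>Persistence and soundness\<close>

lemma cond_frame_rel_carrier:
  "cond_frame W le R \<Longrightarrow> upset W le a \<Longrightarrow> R a x y \<Longrightarrow> x \<in> W \<and> y \<in> W"
  unfolding cond_frame_def by blast

lemma cond_frame_refl: "cond_frame W le R \<Longrightarrow> x \<in> W \<Longrightarrow> le x x"
  unfolding cond_frame_def by (elim conjE) (erule bspec)

lemma cond_frame_trans:
  "cond_frame W le R \<Longrightarrow> x \<in> W \<Longrightarrow> y \<in> W \<Longrightarrow> z \<in> W \<Longrightarrow> le x y \<Longrightarrow> le y z \<Longrightarrow> le x z"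
  unfolding cond_frame_def by (elim conjE) blast

lemma cond_frame_le_rel_comp:
  "cond_frame W le R \<Longrightarrow> upset W le a \<Longrightarrow> x \<in> W \<Longrightarrow> x' \<in> W \<Longrightarrow> y \<in> W \<Longrightarrow>
    le x x' \<Longrightarrow> R a x' y \<Longrightarrow> \<exists>y'\<in>W. R a x y' \<and> le y' y"
  unfolding cond_frame_def by (elim conjE) blast

lemma sat_persistent:
  assumes cf: "cond_frame W le R" and V: "\<forall>n. upset W le (V n)"
  shows "x \<in> W \<Longrightarrow> y \<in> W \<Longrightarrow> le x y \<Longrightarrow> sat W le R V x \<phi> \<Longrightarrow> sat W le R V y \<phi>"
proof (induction \<phi> arbitrary: x y)
  case (Var n)
  then show ?case using V unfolding upset_def by auto
next
  case (Imp a b)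
  then show ?case using cond_frame_trans[OF cf, of x y] by (simp only: sat.simps) blast
next
  case (Cond a b)
  let ?A = "{z\<in>W. sat W le R V z a}"
  have A: "upset W le ?A" using Cond.IH(1) unfolding upset_def by blast
  show ?case unfolding sat.simps
  proof (intro allI impI)
    fix z assume yz: "R ?A y z"
    then have "z \<in> W" using cond_frame_rel_carrier[OF cf A] by blast
    then obtain z' where "z' \<in> W" "R ?A x z'" "le z' z"
      using cond_frame_le_rel_comp[OF cf A Cond.prems(1,2) _ Cond.prems(3) yz] by blast
    then show "sat W le R V z b"
      using Cond.IH(2) Cond.prems(4) \<open>z \<in> W\<close> by simp
  qed
qed (simp_all, blast)

lemma upset_truth_set:
  assumes cf: "cond_frame W le R" and V: "\<forall>n. upset W le (V n)"
  shows "upset W le {z\<in>W. sat W le R V z a}"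
  using sat_persistent[OF cf V] unfolding upset_def by blast

lemma sat_subst:
  assumes cf: "cond_frame W le R" and V: "\<forall>n. upset W le (V n)" and x: "x \<in> W"
  shows "sat W le R V x (subst s \<phi>) \<longleftrightarrow> sat W le R (\<lambda>n. {z\<in>W. sat W le R V z (s n)}) x \<phi>"
  using x
proof (induction \<phi> arbitrary: x)
  case (Cond a b)
  let ?V' = "\<lambda>n. {z\<in>W. sat W le R V z (s n)}"
  have eq: "{z\<in>W. sat W le R V z (subst s a)} = {z\<in>W. sat W le R ?V' z a}"
    using Cond.IH(1) by blast
  have "y \<in> W" if "R {z\<in>W. sat W le R V z (subst s a)} x y" for y
    using cond_frame_rel_carrier[OF cf upset_truth_set[OF cf V] that] by blast
  then show ?case
    using Cond.IH(2) unfolding subst.simps sat.simps eq by blast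
qed simp_all

lemma valid_subst:
  assumes cf: "cond_frame W le R" and "valid_in W le R \<phi>"
  shows "valid_in W le R (subst s \<phi>)"
  using assms upset_truth_set[OF cf] sat_subst[OF cf] unfolding valid_in_def by simp

lemma valid_mp:
  assumes cf: "cond_frame W le R"
  shows "valid_in W le R (Imp a b) \<Longrightarrow> valid_in W le R a \<Longrightarrow> valid_in W le R b"
  unfolding valid_in_def using cond_frame_refl[OF cf] by auto

lemma valid_Iff_iff:
  assumes cf: "cond_frame W le R"
  shows "valid_in W le R (Iff a b) \<longleftrightarrow>
    (\<forall>V. (\<forall>n. upset W le (V n)) \<longrightarrow> (\<forall>x\<in>W. sat W le R V x a \<longleftrightarrow> sat W le R V x b))"
  unfolding valid_in_def Iff_def using cond_frame_refl[OF cf] by auto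

lemma valid_Cond_cong_left:
  assumes cf: "cond_frame W le R" and ab: "valid_in W le R (Iff a b)"
  shows "valid_in W le R (Iff (Cond a c) (Cond b c))"
  using ab unfolding valid_Iff_iff[OF cf] sat.simps
  by (metis (no_types, lifting) Collect_cong)

lemma valid_Cond_cong_right:
  assumes cf: "cond_frame W le R" and ab: "valid_in W le R (Iff a b)"
  shows "valid_in W le R (Iff (Cond c a) (Cond c b))"
  using ab cond_frame_rel_carrier[OF cf upset_truth_set[OF cf]]
  unfolding valid_Iff_iff[OF cf] sat.simps by blast

lemma valid_IPC_axioms:
  assumes cf: "cond_frame W le R" and ax: "\<phi> \<in> IPC_axioms"
  shows "valid_in W le R \<phi>"
  unfolding valid_in_def
proof (intro allI impI ballI)
  fix V :: "nat \<Rightarrow> _" and x assume V: "\<forall>n. upset W le (V n)" and x: "x \<in> W"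
  have VW: "y \<in> V n \<Longrightarrow> y \<in> W" for n y using V unfolding upset_def by blast
  have up: "y \<in> V n \<Longrightarrow> z \<in> W \<Longrightarrow> le y z \<Longrightarrow> z \<in> V n" for n y z
    using V unfolding upset_def by blast
  note tr = cond_frame_trans[OF cf] and rf = cond_frame_refl[OF cf]
  have "sat W le R V x (Imp pp (Imp qq pp))" using x by simp (meson VW tr up)
  moreover have "sat W le R V x (Imp (Imp pp (Imp qq rr)) (Imp (Imp pp qq) (Imp pp rr)))"
    using x by simp (meson VW tr rf up)
  moreover have "sat W le R V x (Imp pp (Imp qq (Conj pp qq)))" using x by simp (meson VW tr up)
  moreover have "sat W le R V x (Imp (Imp pp rr) (Imp (Imp qq rr) (Imp (Disj pp qq) rr)))"
    using x by simp (meson VW tr rf up)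
  moreover have "sat W le R V x (Imp (Conj pp qq) pp)" "sat W le R V x (Imp (Conj pp qq) qq)"
    "sat W le R V x (Imp pp (Disj pp qq))" "sat W le R V x (Imp qq (Disj pp qq))"
    "sat W le R V x (Imp Bot pp)"
    by simp_all
  ultimately show "sat W le R V x \<phi>" using ax unfolding IPC_axioms_def by blast
qed

lemma valid_ICK_axioms:
  assumes cf: "cond_frame W le R"
  shows "\<phi> \<in> ICK_axioms \<Longrightarrow> valid_in W le R \<phi>"
  unfolding ICK_axioms_def by (auto simp: valid_Iff_iff[OF cf] Top_def)

lemma valid_ICK_ext:
  assumes cf: "cond_frame W le R" and \<Gamma>: "\<forall>\<gamma>\<in>\<Gamma>. valid_in W le R \<gamma>"
  shows "\<phi> \<in> ICK_ext \<Gamma> \<Longrightarrow> valid_in W le R \<phi>"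
proof (induction rule: ICK_ext.induct)
  case (ipc a) then show ?case using valid_IPC_axioms[OF cf] by blast
next
  case (gam a) then show ?case using \<Gamma> by blast
next
  case (ick a) then show ?case using valid_ICK_axioms[OF cf] by blast
next
  case (sub a s) then show ?case using valid_subst[OF cf] by blast
next
  case (mp a b) then show ?case using valid_mp[OF cf] by blast
next
  case (congL a b c) then show ?case using valid_Cond_cong_left[OF cf] by blast
next
  case (congR a b c) then show ?case using valid_Cond_cong_right[OF cf] by blast
qed

lemma up_subset_upset_iff:
  assumes cf: "cond_frame W le R" and c: "upset W le c" and S: "S \<subseteq> W"
  shows "up W le S \<subseteq> c \<longleftrightarrow> S \<subseteq> c"
  using S c cond_frame_refl[OF cf] unfolding up_def upset_def by blast

lemma cautious_frame_cond_frame: "cautious_frame W le R \<Longrightarrow> cond_frame W le R"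
  unfolding cautious_frame_def by blast

lemma cautious_frame_succs_subset:
  "cautious_frame W le R \<Longrightarrow> x \<in> W \<Longrightarrow> upset W le a \<Longrightarrow> succs (R a) x \<subseteq> a"
  unfolding cautious_frame_def by blast

lemma cautious_frame_succs_subset_iff:
  assumes cc: "cautious_frame W le R" and x: "x \<in> W"
    and a: "upset W le a" and b: "upset W le b" and c: "upset W le c"
    and ab: "succs (R a) x \<subseteq> b" "b \<subseteq> a"
  shows "succs (R a) x \<subseteq> c \<longleftrightarrow> succs (R b) x \<subseteq> c"
proof -
  note cf = cautious_frame_cond_frame[OF cc]
  have "up W le (succs (R a) x) = up W le (succs (R b) x)"
    using cc x a b ab unfolding cautious_frame_def by blast
  moreover have "succs (R a) x \<subseteq> W" "succs (R b) x \<subseteq> W"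
    using cond_frame_rel_carrier[OF cf a] cond_frame_rel_carrier[OF cf b]
    unfolding succs_def by blast+
  ultimately show ?thesis using up_subset_upset_iff[OF cf c] by metis
qed

lemma sat_Cond_iff_succs_subset:
  assumes cf: "cond_frame W le R" and V: "\<forall>n. upset W le (V n)"
  shows "sat W le R V x (Cond a b) \<longleftrightarrow>
    succs (R {z\<in>W. sat W le R V z a}) x \<subseteq> {z\<in>W. sat W le R V z b}"
  using cond_frame_rel_carrier[OF cf upset_truth_set[OF cf V]]
  unfolding succs_def sat.simps by blast

definition CC_axioms :: "form set" where
  "CC_axioms = {
     Cond pp pp,
     Imp (Conj (Cond pp qq) (Cond (Conj pp qq) rr)) (Cond pp rr),
     Imp (Conj (Cond pp qq) (Cond pp rr)) (Cond (Conj pp qq) rr) }"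

lemma iCC_eq_ICK_ext: "iCC = ICK_ext CC_axioms"
  unfolding iCC_def CC_axioms_def ..

lemma cautious_frame_valid_CC_axioms:
  assumes cc: "cautious_frame W le R" and ax: "\<phi> \<in> CC_axioms"
  shows "valid_in W le R \<phi>"
  unfolding valid_in_def
proof (intro allI impI ballI)
  fix V :: "nat \<Rightarrow> _" and x assume V: "\<forall>n. upset W le (V n)" and x: "x \<in> W"
  note cf = cautious_frame_cond_frame[OF cc]
  have Var: "{z\<in>W. z \<in> V n} = V n" for n
    using V unfolding upset_def by auto
  have Conj: "{z\<in>W. z \<in> V 0 \<and> z \<in> V 1} = V 0 \<inter> V 1"
    using V unfolding upset_def by auto
  have V01: "upset W le (V 0 \<inter> V 1)" using V unfolding upset_def by blast
  note sat_Cond = sat_Cond_iff_succs_subset[OF cf V]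
  have cautious: "succs (R (V 0)) y \<subseteq> V n \<longleftrightarrow> succs (R (V 0 \<inter> V 1)) y \<subseteq> V n"
    if y: "y \<in> W" and sub: "succs (R (V 0)) y \<subseteq> V 1" for y n
  proof (rule cautious_frame_succs_subset_iff[OF cc y _ V01])
    show "succs (R (V 0)) y \<subseteq> V 0 \<inter> V 1"
      using cautious_frame_succs_subset[OF cc y] V sub by blast
  qed (use V in auto)
  have "sat W le R V x (Cond pp pp)"
    unfolding sat_Cond sat.simps(1,3,5) Var using cautious_frame_succs_subset[OF cc x] V by simp
  moreover have "sat W le R V x (Imp (Conj (Cond pp qq) (Cond (Conj pp qq) rr)) (Cond pp rr))"
    unfolding sat_Cond sat.simps(1,3,5) Var Conj using cautious by blast
  moreover have "sat W le R V x (Imp (Conj (Cond pp qq) (Cond pp rr)) (Cond (Conj pp qq) rr))"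
    unfolding sat_Cond sat.simps(1,3,5) Var Conj using cautious by blast
  ultimately show "sat W le R V x \<phi>" using ax unfolding CC_axioms_def by blast
qed

theorem iCC_sound: "cautious_frame W le R \<Longrightarrow> \<phi> \<in> iCC \<Longrightarrow> valid_in W le R \<phi>"
  unfolding iCC_eq_ICK_ext
  using valid_ICK_ext[OF cautious_frame_cond_frame] cautious_frame_valid_CC_axioms by blast

section \<open>Derived rules of ICK\<close>

context
  fixes \<Gamma> :: "form set"
begin

lemma ICK_IPC_instance: "\<phi> \<in> IPC_axioms \<Longrightarrow> subst s \<phi> \<in> ICK_ext \<Gamma>"
  by (intro ICK_ext.sub ICK_ext.ipc)

lemma ICK_ICK_instance: "\<phi> \<in> ICK_axioms \<Longrightarrow> subst s \<phi> \<in> ICK_ext \<Gamma>"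
  by (intro ICK_ext.sub ICK_ext.ick)

lemma ICK_K: "Imp a (Imp b a) \<in> ICK_ext \<Gamma>"
  using ICK_IPC_instance[of "Imp pp (Imp qq pp)" "(\<lambda>_. a)(1 := b)"]
  by (simp add: IPC_axioms_def)

lemma ICK_S: "Imp (Imp a (Imp b c)) (Imp (Imp a b) (Imp a c)) \<in> ICK_ext \<Gamma>"
  using ICK_IPC_instance[of "Imp (Imp pp (Imp qq rr)) (Imp (Imp pp qq) (Imp pp rr))"
      "(\<lambda>_. a)(1 := b, 2 := c)"]
  by (simp add: IPC_axioms_def)

lemma ICK_conjunct1: "Imp (Conj a b) a \<in> ICK_ext \<Gamma>"
  using ICK_IPC_instance[of "Imp (Conj pp qq) pp" "(\<lambda>_. a)(1 := b)"]
  by (simp add: IPC_axioms_def)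

lemma ICK_conjunct2: "Imp (Conj a b) b \<in> ICK_ext \<Gamma>"
  using ICK_IPC_instance[of "Imp (Conj pp qq) qq" "(\<lambda>_. a)(1 := b)"]
  by (simp add: IPC_axioms_def)

lemma ICK_conjI: "Imp a (Imp b (Conj a b)) \<in> ICK_ext \<Gamma>"
  using ICK_IPC_instance[of "Imp pp (Imp qq (Conj pp qq))" "(\<lambda>_. a)(1 := b)"]
  by (simp add: IPC_axioms_def)

lemma ICK_disjI1: "Imp a (Disj a b) \<in> ICK_ext \<Gamma>"
  using ICK_IPC_instance[of "Imp pp (Disj pp qq)" "(\<lambda>_. a)(1 := b)"]
  by (simp add: IPC_axioms_def)

lemma ICK_disjI2: "Imp b (Disj a b) \<in> ICK_ext \<Gamma>"
  using ICK_IPC_instance[of "Imp qq (Disj pp qq)" "(\<lambda>_. a)(1 := b)"]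
  by (simp add: IPC_axioms_def)

lemma ICK_disjE: "Imp (Imp a c) (Imp (Imp b c) (Imp (Disj a b) c)) \<in> ICK_ext \<Gamma>"
  using ICK_IPC_instance[of "Imp (Imp pp rr) (Imp (Imp qq rr) (Imp (Disj pp qq) rr))"
      "(\<lambda>_. a)(1 := b, 2 := c)"]
  by (simp add: IPC_axioms_def)

lemma ICK_botE: "Imp Bot a \<in> ICK_ext \<Gamma>"
  using ICK_IPC_instance[of "Imp Bot pp" "\<lambda>_. a"] by (simp add: IPC_axioms_def)

lemma ICK_Cond_conj: "Iff (Cond a (Conj b c)) (Conj (Cond a b) (Cond a c)) \<in> ICK_ext \<Gamma>"
  using ICK_ICK_instance[of "Iff (Cond pp (Conj qq rr)) (Conj (Cond pp qq) (Cond pp rr))"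
      "(\<lambda>_. a)(1 := b, 2 := c)"]
  by (simp add: ICK_axioms_def Iff_def)

lemma ICK_Cond_Top: "Iff (Cond a Top) Top \<in> ICK_ext \<Gamma>"
  using ICK_ICK_instance[of "Iff (Cond pp Top) Top" "\<lambda>_. a"]
  by (simp add: ICK_axioms_def Iff_def Top_def)

lemma ICK_imp_K: "b \<in> ICK_ext \<Gamma> \<Longrightarrow> Imp a b \<in> ICK_ext \<Gamma>"
  using ICK_ext.mp ICK_K by blast

lemma ICK_imp_refl: "Imp a a \<in> ICK_ext \<Gamma>"
  using ICK_ext.mp[OF ICK_ext.mp[OF ICK_S ICK_K] ICK_K[of a a]] .

lemma ICK_imp_trans: "Imp a b \<in> ICK_ext \<Gamma> \<Longrightarrow> Imp b c \<in> ICK_ext \<Gamma> \<Longrightarrow> Imp a c \<in> ICK_ext \<Gamma>"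
  using ICK_ext.mp[OF ICK_ext.mp[OF ICK_S ICK_imp_K]] by blast

lemma ICK_imp_conj:
  assumes "Imp a b \<in> ICK_ext \<Gamma>" and "Imp a c \<in> ICK_ext \<Gamma>"
  shows "Imp a (Conj b c) \<in> ICK_ext \<Gamma>"
proof -
  have "Imp a (Imp c (Conj b c)) \<in> ICK_ext \<Gamma>" using ICK_imp_trans[OF assms(1) ICK_conjI] .
  then show ?thesis using ICK_ext.mp[OF ICK_ext.mp[OF ICK_S]] assms(2) by blast
qed

lemma ICK_IffI: "Imp a b \<in> ICK_ext \<Gamma> \<Longrightarrow> Imp b a \<in> ICK_ext \<Gamma> \<Longrightarrow> Iff a b \<in> ICK_ext \<Gamma>"
  unfolding Iff_def using ICK_ext.mp[OF ICK_ext.mp[OF ICK_conjI]] by blast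

lemma ICK_IffD1: "Iff a b \<in> ICK_ext \<Gamma> \<Longrightarrow> Imp a b \<in> ICK_ext \<Gamma>"
  unfolding Iff_def using ICK_ext.mp[OF ICK_conjunct1] by blast

lemma ICK_IffD2: "Iff a b \<in> ICK_ext \<Gamma> \<Longrightarrow> Imp b a \<in> ICK_ext \<Gamma>"
  unfolding Iff_def using ICK_ext.mp[OF ICK_conjunct2] by blast

lemma ICK_Cond_mono: "Imp b c \<in> ICK_ext \<Gamma> \<Longrightarrow> Imp (Cond a b) (Cond a c) \<in> ICK_ext \<Gamma>"
proof -
  assume bc: "Imp b c \<in> ICK_ext \<Gamma>"
  have "Iff b (Conj b c) \<in> ICK_ext \<Gamma>"
    by (rule ICK_IffI[OF ICK_imp_conj[OF ICK_imp_refl bc] ICK_conjunct1])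
  then have "Imp (Cond a b) (Cond a (Conj b c)) \<in> ICK_ext \<Gamma>"
    using ICK_IffD1[OF ICK_ext.congR] by blast
  then have "Imp (Cond a b) (Conj (Cond a b) (Cond a c)) \<in> ICK_ext \<Gamma>"
    using ICK_imp_trans ICK_IffD1[OF ICK_Cond_conj] by blast
  then show ?thesis using ICK_imp_trans ICK_conjunct2 by blast
qed

lemma ICK_Cond_nec: "b \<in> ICK_ext \<Gamma> \<Longrightarrow> Cond a b \<in> ICK_ext \<Gamma>"
proof -
  assume b: "b \<in> ICK_ext \<Gamma>"
  have Top: "Top \<in> ICK_ext \<Gamma>" unfolding Top_def by (rule ICK_imp_refl)
  have "Iff b Top \<in> ICK_ext \<Gamma>" by (rule ICK_IffI[OF ICK_imp_K[OF Top] ICK_imp_K[OF b]])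
  then have "Imp (Cond a Top) (Cond a b) \<in> ICK_ext \<Gamma>" using ICK_IffD2[OF ICK_ext.congR] by blast
  moreover have "Cond a Top \<in> ICK_ext \<Gamma>" using ICK_ext.mp[OF ICK_IffD2[OF ICK_Cond_Top] Top] .
  ultimately show ?thesis using ICK_ext.mp by blast
qed

subsection \<open>Theories and Lindenbaum's lemma\<close>

definition ick_theory :: "form set \<Rightarrow> bool" where
  "ick_theory T \<longleftrightarrow> ICK_ext \<Gamma> \<subseteq> T \<and> (\<forall>a b. Imp a b \<in> T \<longrightarrow> a \<in> T \<longrightarrow> b \<in> T)"

definition prime_theory :: "form set \<Rightarrow> bool" where
  "prime_theory T \<longleftrightarrow> ick_theory T \<and> Bot \<notin> T \<and> (\<forall>a b. Disj a b \<in> T \<longrightarrow> a \<in> T \<or> b \<in> T)"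

lemma ick_theory_mp: "ick_theory T \<Longrightarrow> Imp a b \<in> T \<Longrightarrow> a \<in> T \<Longrightarrow> b \<in> T"
  unfolding ick_theory_def by blast

lemma ick_theory_ICK_extD: "ick_theory T \<Longrightarrow> a \<in> ICK_ext \<Gamma> \<Longrightarrow> a \<in> T"
  unfolding ick_theory_def by blast

lemma ick_theory_ICK_ext_mp: "ick_theory T \<Longrightarrow> Imp a b \<in> ICK_ext \<Gamma> \<Longrightarrow> a \<in> T \<Longrightarrow> b \<in> T"
  unfolding ick_theory_def by blast

lemma ick_theory_Conj_iff: "ick_theory T \<Longrightarrow> Conj a b \<in> T \<longleftrightarrow> a \<in> T \<and> b \<in> T"
  using ick_theory_ICK_ext_mp[OF _ ICK_conjunct1] ick_theory_ICK_ext_mp[OF _ ICK_conjunct2]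
    ick_theory_mp[OF _ ick_theory_ICK_ext_mp[OF _ ICK_conjI]]
  by blast

lemma ick_theory_ICK_ext: "ick_theory (ICK_ext \<Gamma>)"
  unfolding ick_theory_def using ICK_ext.mp by blast

lemma prime_theory_Disj_iff: "prime_theory T \<Longrightarrow> Disj a b \<in> T \<longleftrightarrow> a \<in> T \<or> b \<in> T"
  unfolding prime_theory_def using ick_theory_ICK_ext_mp ICK_disjI1 ICK_disjI2 by blast

lemma ick_theory_imp_closure:
  assumes T: "ick_theory T"
  shows "ick_theory {c. Imp a c \<in> T}" and "T \<subseteq> {c. Imp a c \<in> T}" and "a \<in> {c. Imp a c \<in> T}"
proof -
  show "ick_theory {c. Imp a c \<in> T}"
    unfolding ick_theory_def
    using ick_theory_ICK_extD[OF T ICK_imp_K] ick_theory_mp[OF T ick_theory_ICK_ext_mp[OF T ICK_S]]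
    by blast
  show "T \<subseteq> {c. Imp a c \<in> T}" using ick_theory_ICK_ext_mp[OF T ICK_K] by blast
  show "a \<in> {c. Imp a c \<in> T}" using ick_theory_ICK_extD[OF T ICK_imp_refl] by blast
qed

definition cond_conseq :: "form set \<Rightarrow> form \<Rightarrow> form set" where
  "cond_conseq G f = {c. Cond f c \<in> G}"

lemma ick_theory_cond_conseq:
  assumes G: "ick_theory G"
  shows "ick_theory (cond_conseq G f)"
  unfolding ick_theory_def cond_conseq_def
proof (intro conjI allI impI subsetI)
  fix c assume "c \<in> ICK_ext \<Gamma>"
  then show "c \<in> {c. Cond f c \<in> G}" using ick_theory_ICK_extD[OF G ICK_Cond_nec] by blast
next
  fix b c assume "Imp b c \<in> {c. Cond f c \<in> G}" "b \<in> {c. Cond f c \<in> G}"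
  then have "Cond f (Conj (Imp b c) b) \<in> G"
    using ick_theory_Conj_iff[OF G] ick_theory_ICK_ext_mp[OF G ICK_IffD2[OF ICK_Cond_conj]] by auto
  moreover have "Imp (Conj (Imp b c) b) c \<in> ICK_ext \<Gamma>"
    using ICK_ext.mp[OF ICK_ext.mp[OF ICK_S ICK_conjunct1] ICK_conjunct2] .
  ultimately show "c \<in> {c. Cond f c \<in> G}" using ick_theory_ICK_ext_mp[OF G ICK_Cond_mono] by blast
qed

lemma ick_theory_chain_Union:
  assumes "C \<noteq> {}" and "\<forall>X\<in>C. ick_theory X" and "\<forall>X\<in>C. \<forall>Y\<in>C. X \<subseteq> Y \<or> Y \<subseteq> X"
  shows "ick_theory (\<Union>C)"
  unfolding ick_theory_def
proof (intro conjI allI impI)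
  show "ICK_ext \<Gamma> \<subseteq> \<Union>C" using assms(1,2) unfolding ick_theory_def by blast
next
  fix a b assume "Imp a b \<in> \<Union>C" "a \<in> \<Union>C"
  then obtain X Y where "X \<in> C" "Y \<in> C" "Imp a b \<in> X" "a \<in> Y" by blast
  then show "b \<in> \<Union>C" using assms(2,3) ick_theory_mp by (metis UnionI subsetD)
qed

lemma maximal_ick_theory_prime:
  assumes M: "ick_theory M" "\<psi> \<notin> M"
    and max: "\<And>X. ick_theory X \<Longrightarrow> M \<subseteq> X \<Longrightarrow> \<psi> \<notin> X \<Longrightarrow> X = M"
  shows "prime_theory M"
proof -
  have "Imp a \<psi> \<in> M" if "a \<notin> M" for a
  proof (rule ccontr)
    assume "Imp a \<psi> \<notin> M"
    then have "{c. Imp a c \<in> M} = M"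
      using max ick_theory_imp_closure(1,2)[OF M(1)] by blast
    then show False using ick_theory_imp_closure(3)[OF M(1), of a] that by blast
  qed
  then have "a \<in> M \<or> b \<in> M" if "Disj a b \<in> M" for a b
    using that M ick_theory_mp[OF M(1)] ick_theory_ICK_extD[OF M(1) ICK_disjE] by meson
  moreover have "Bot \<notin> M" using ick_theory_ICK_ext_mp[OF M(1) ICK_botE] M(2) by blast
  ultimately show ?thesis unfolding prime_theory_def using M(1) by blast
qed

lemma prime_theory_extension:
  assumes T: "ick_theory T" and \<psi>: "\<psi> \<notin> T"
  obtains P where "prime_theory P" "T \<subseteq> P" "\<psi> \<notin> P"
proof -
  let ?F = "{S. ick_theory S \<and> T \<subseteq> S \<and> \<psi> \<notin> S}"
  have "\<exists>M\<in>?F. \<forall>X\<in>?F. M \<subseteq> X \<longrightarrow> X = M"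
  proof (rule subset_Zorn_nonempty)
    fix C assume C: "C \<noteq> {}" "subset.chain ?F C"
    then have "ick_theory (\<Union>C)"
      by (intro ick_theory_chain_Union) (auto simp: subset.chain_def)
    then show "\<Union>C \<in> ?F" using C unfolding subset.chain_def by blast
  qed (use T \<psi> in blast)
  then obtain M where "M \<in> ?F" and "\<forall>X\<in>?F. M \<subseteq> X \<longrightarrow> X = M" by blast
  then show ?thesis
    using maximal_ick_theory_prime[of M \<psi>] that by (metis (mono_tags, lifting) mem_Collect_eq order_trans)
qed

lemma prime_theory_separation:
  assumes T: "ick_theory T" and "Imp a b \<notin> T"
  obtains P where "prime_theory P" "T \<subseteq> P" "a \<in> P" "b \<notin> P"
proof -
  have "b \<notin> {c. Imp a c \<in> T}" using assms(2) by blast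
  then obtain P where "prime_theory P" "{c. Imp a c \<in> T} \<subseteq> P" "b \<notin> P"
    using prime_theory_extension[OF ick_theory_imp_closure(1)[OF T]] by blast
  then show ?thesis using that ick_theory_imp_closure(2,3)[OF T] by blast
qed

end

section \<open>The canonical cautious frame\<close>

locale cautious_logic =
  fixes \<Gamma> :: "form set"
  assumes CC_axioms_derivable: "CC_axioms \<subseteq> ICK_ext \<Gamma>"
begin

lemma CC_instance: "\<phi> \<in> CC_axioms \<Longrightarrow> subst s \<phi> \<in> ICK_ext \<Gamma>"
  using CC_axioms_derivable by (blast intro: ICK_ext.sub)

lemma Cond_refl: "Cond a a \<in> ICK_ext \<Gamma>"
  using CC_instance[of "Cond pp pp" "\<lambda>_. a"] by (simp add: CC_axioms_def)

lemma Cond_cut: "Imp (Conj (Cond a b) (Cond (Conj a b) c)) (Cond a c) \<in> ICK_ext \<Gamma>"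
  using CC_instance[of "Imp (Conj (Cond pp qq) (Cond (Conj pp qq) rr)) (Cond pp rr)"
      "(\<lambda>_. a)(1 := b, 2 := c)"]
  by (simp add: CC_axioms_def)

lemma Cond_cautious_mono: "Imp (Conj (Cond a b) (Cond a c)) (Cond (Conj a b) c) \<in> ICK_ext \<Gamma>"
  using CC_instance[of "Imp (Conj (Cond pp qq) (Cond pp rr)) (Cond (Conj pp qq) rr)"
      "(\<lambda>_. a)(1 := b, 2 := c)"]
  by (simp add: CC_axioms_def)

definition worlds :: "form set set" where
  "worlds = {P. prime_theory \<Gamma> P}"

definition extension :: "form \<Rightarrow> form set set" where
  "extension f = {D \<in> worlds. f \<in> D}"

definition cond_succs :: "form set \<Rightarrow> form \<Rightarrow> form set set" where
  "cond_succs G f = {D \<in> worlds. cond_conseq G f \<subseteq> D}"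

definition indexed_by :: "form set \<Rightarrow> form set set \<Rightarrow> form \<Rightarrow> bool" where
  "indexed_by G a f \<longleftrightarrow> cond_succs G f \<subseteq> a \<and> a \<subseteq> extension f"

definition canon_rel :: "form set set \<Rightarrow> form set \<Rightarrow> form set \<Rightarrow> bool" where
  "canon_rel a G D \<longleftrightarrow> G \<in> worlds \<and> D \<in> worlds \<and>
     (if \<exists>f. indexed_by G a f then D \<in> cond_succs G (SOME f. indexed_by G a f) else D \<in> a)"

definition canon_val :: "nat \<Rightarrow> form set set" where
  "canon_val n = extension (Var n)"

lemma worlds_ick_theory: "G \<in> worlds \<Longrightarrow> ick_theory \<Gamma> G"
  unfolding worlds_def prime_theory_def by blast

lemma extension_Conj: "extension (Conj f g) = extension f \<inter> extension g"
  unfolding extension_def using ick_theory_Conj_iff worlds_ick_theory by blast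

lemma Imp_in_iff_worlds:
  assumes G: "ick_theory \<Gamma> G"
  shows "Imp a b \<in> G \<longleftrightarrow> (\<forall>D\<in>worlds. G \<subseteq> D \<longrightarrow> a \<in> D \<longrightarrow> b \<in> D)"
proof
  assume sep: "\<forall>D\<in>worlds. G \<subseteq> D \<longrightarrow> a \<in> D \<longrightarrow> b \<in> D"
  show "Imp a b \<in> G"
  proof (rule ccontr)
    assume "Imp a b \<notin> G"
    then obtain P where "prime_theory \<Gamma> P" "G \<subseteq> P" "a \<in> P" "b \<notin> P"
      using prime_theory_separation[OF G] by blast
    then show False using sep unfolding worlds_def by blast
  qed
qed (use ick_theory_mp worlds_ick_theory in blast)

lemma cond_succs_subset_extension_iff:
  assumes G: "ick_theory \<Gamma> G"
  shows "cond_succs G f \<subseteq> extension c \<longleftrightarrow> Cond f c \<in> G"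
proof
  assume sub: "cond_succs G f \<subseteq> extension c"
  show "Cond f c \<in> G"
  proof (rule ccontr)
    assume "Cond f c \<notin> G"
    then have "c \<notin> cond_conseq G f" unfolding cond_conseq_def by blast
    then obtain P where "prime_theory \<Gamma> P" "cond_conseq G f \<subseteq> P" "c \<notin> P"
      using prime_theory_extension[OF ick_theory_cond_conseq[OF G]] by blast
    then show False using sub unfolding cond_succs_def extension_def worlds_def by blast
  qed
qed (auto simp: cond_succs_def extension_def cond_conseq_def)

lemma extension_subset_iff: "extension c \<subseteq> extension f \<longleftrightarrow> Imp c f \<in> ICK_ext \<Gamma>"
proof
  assume sub: "extension c \<subseteq> extension f"
  show "Imp c f \<in> ICK_ext \<Gamma>"
  proof (rule ccontr)
    assume "Imp c f \<notin> ICK_ext \<Gamma>"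
    then obtain P where "prime_theory \<Gamma> P" "c \<in> P" "f \<notin> P"
      using prime_theory_separation[OF ick_theory_ICK_ext] by blast
    then show False using sub unfolding extension_def worlds_def by blast
  qed
qed (auto simp: extension_def dest: worlds_ick_theory ick_theory_ICK_ext_mp)

text \<open>Cut and cautious monotonicity give \<open>f\<close> and \<open>f \<and> c\<close>, hence \<open>f\<close> and \<open>c\<close>, the same
  conditional consequences at \<open>G\<close>.\<close>

lemma cond_succs_eq_if_between:
  assumes G: "ick_theory \<Gamma> G"
    and sub: "cond_succs G f \<subseteq> extension c" and ext: "extension c \<subseteq> extension f"
  shows "cond_succs G f = cond_succs G c"
proof -
  have fc: "Cond f c \<in> G" using sub cond_succs_subset_extension_iff[OF G] by blast
  have "Iff c (Conj f c) \<in> ICK_ext \<Gamma>"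
    using ext extension_subset_iff ICK_IffI ICK_imp_conj ICK_imp_refl ICK_conjunct2 by metis
  then have Cond_c: "Cond c t \<in> G \<longleftrightarrow> Cond (Conj f c) t \<in> G" for t
    using ick_theory_ICK_ext_mp[OF G] ICK_IffD1 ICK_IffD2 ICK_ext.congL by metis
  have "Cond f t \<in> G \<longleftrightarrow> Cond (Conj f c) t \<in> G" for t
    using fc ick_theory_Conj_iff[OF G] ick_theory_ICK_ext_mp[OF G Cond_cut]
      ick_theory_ICK_ext_mp[OF G Cond_cautious_mono] by blast
  then have "cond_conseq G f = cond_conseq G c"
    unfolding cond_conseq_def using Cond_c by blast
  then show ?thesis unfolding cond_succs_def by simp
qed

lemma indexed_by_cond_succs_unique:
  assumes G: "ick_theory \<Gamma> G" and f: "indexed_by G a f" and g: "indexed_by G a g"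
  shows "cond_succs G f = cond_succs G g"
proof -
  have "cond_succs G f = cond_succs G (Conj f g)"
    using f g by (intro cond_succs_eq_if_between[OF G]) (auto simp: indexed_by_def extension_Conj)
  also have "\<dots> = cond_succs G (Conj g f)"
    using f g calculation
    by (intro cond_succs_eq_if_between[OF G]) (auto simp: indexed_by_def extension_Conj)
  also have "\<dots> = cond_succs G g"
    using f g by (intro cond_succs_eq_if_between[OF G, symmetric]) (auto simp: indexed_by_def extension_Conj)
  finally show ?thesis .
qed

lemma canon_rel_indexed:
  assumes G: "G \<in> worlds" and f: "indexed_by G a f"
  shows "canon_rel a G D \<longleftrightarrow> D \<in> cond_succs G f"
proof -
  have "indexed_by G a (SOME f. indexed_by G a f)" using f by (rule someI)
  then have "cond_succs G (SOME f. indexed_by G a f) = cond_succs G f"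
    using indexed_by_cond_succs_unique[OF worlds_ick_theory[OF G] _ f] by blast
  then show ?thesis unfolding canon_rel_def using G f by (auto simp: cond_succs_def)
qed

lemma canon_rel_unindexed:
  "G \<in> worlds \<Longrightarrow> \<nexists>f. indexed_by G a f \<Longrightarrow> canon_rel a G D \<longleftrightarrow> D \<in> worlds \<and> D \<in> a"
  unfolding canon_rel_def by auto

lemma canon_rel_worlds: "canon_rel a G D \<Longrightarrow> G \<in> worlds \<and> D \<in> worlds"
  unfolding canon_rel_def by blast

lemma canon_rel_in_index:
  assumes R: "canon_rel a G D"
  shows "D \<in> a"
proof (cases "\<exists>f. indexed_by G a f")
  case True
  then obtain f where "indexed_by G a f" by blast
  then show ?thesis
    using R canon_rel_indexed canon_rel_worlds unfolding indexed_by_def by blast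
next
  case False
  then show ?thesis using R canon_rel_unindexed canon_rel_worlds by blast
qed

lemma cond_succs_antimono: "G \<subseteq> G' \<Longrightarrow> cond_succs G' f \<subseteq> cond_succs G f"
  unfolding cond_succs_def cond_conseq_def by blast

lemma indexed_by_mono: "G \<subseteq> G' \<Longrightarrow> indexed_by G a f \<Longrightarrow> indexed_by G' a f"
  unfolding indexed_by_def using cond_succs_antimono by blast

lemma extension_indexed_by: "ick_theory \<Gamma> G \<Longrightarrow> indexed_by G (extension f) f"
  unfolding indexed_by_def using cond_succs_subset_extension_iff ick_theory_ICK_extD Cond_refl by blast

lemma canon_rel_mono:
  assumes G: "G \<in> worlds" and GG': "G \<subseteq> G'" and R: "canon_rel a G' D"
  shows "canon_rel a G D"
proof (cases "\<exists>f. indexed_by G a f")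
  case True
  then obtain f where f: "indexed_by G a f" by blast
  have "D \<in> cond_succs G' f"
    using canon_rel_indexed R canon_rel_worlds indexed_by_mono[OF GG' f] by blast
  then show ?thesis
    using canon_rel_indexed[OF G f] cond_succs_antimono[OF GG'] by blast
next
  case False
  then show ?thesis
    using canon_rel_unindexed[OF G False] canon_rel_in_index[OF R] canon_rel_worlds[OF R] by blast
qed

lemma canonical_cond_frame:
  assumes "worlds \<noteq> {}"
  shows "cond_frame worlds (\<subseteq>) canon_rel"
  unfolding cond_frame_def
proof (intro conjI ballI allI impI)
  fix a G G' D assume "G \<in> worlds" "G \<subseteq> G'" "canon_rel a G' D" "D \<in> worlds"
  then show "\<exists>D'\<in>worlds. canon_rel a G D' \<and> D' \<subseteq> D" using canon_rel_mono by blast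
qed (use assms canon_rel_worlds in auto)

lemma canon_rel_succs_eq:
  assumes G: "G \<in> worlds" and a: "upset worlds (\<subseteq>) a"
    and ab: "succs (canon_rel a) G \<subseteq> b" "b \<subseteq> a"
  shows "succs (canon_rel a) G = succs (canon_rel b) G"
proof (cases "\<exists>f. indexed_by G a f")
  case True
  then obtain f where f: "indexed_by G a f" by blast
  then have Sa: "succs (canon_rel a) G = cond_succs G f"
    unfolding succs_def canon_rel_indexed[OF G f] by simp
  have fb: "indexed_by G b f" using f ab Sa unfolding indexed_by_def by blast
  have "succs (canon_rel b) G = cond_succs G f"
    unfolding succs_def canon_rel_indexed[OF G fb] by simp
  then show ?thesis using Sa by simp
next
  case False
  have "a \<subseteq> worlds" using a unfolding upset_def by blast
  then have "succs (canon_rel a) G = a"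
    unfolding succs_def canon_rel_unindexed[OF G False] by blast
  then show ?thesis using ab by simp
qed

lemma canonical_cautious_frame:
  assumes "worlds \<noteq> {}"
  shows "cautious_frame worlds (\<subseteq>) canon_rel"
  unfolding cautious_frame_def
proof (intro conjI ballI allI impI)
  show "cond_frame worlds (\<subseteq>) canon_rel" using canonical_cond_frame[OF assms] .
next
  fix G a b
  show "succs (canon_rel a) G \<subseteq> a" using canon_rel_in_index unfolding succs_def by blast
  assume "G \<in> worlds" "upset worlds (\<subseteq>) a" "succs (canon_rel a) G \<subseteq> b \<and> b \<subseteq> a"
  then show "up worlds (\<subseteq>) (succs (canon_rel a) G) = up worlds (\<subseteq>) (succs (canon_rel b) G)"
    using canon_rel_succs_eq by metis
qed

lemma canon_val_upset: "upset worlds (\<subseteq>) (canon_val n)"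
  unfolding upset_def canon_val_def extension_def by blast

lemma truth_lemma: "G \<in> worlds \<Longrightarrow> sat worlds (\<subseteq>) canon_rel canon_val G \<phi> \<longleftrightarrow> \<phi> \<in> G"
proof (induction \<phi> arbitrary: G)
  case (Var n)
  then show ?case by (simp add: canon_val_def extension_def)
next
  case Bot
  then show ?case by (simp add: worlds_def prime_theory_def)
next
  case (Conj a b)
  then show ?case using ick_theory_Conj_iff[OF worlds_ick_theory] by simp
next
  case (Disj a b)
  then show ?case using prime_theory_Disj_iff unfolding worlds_def by simp
next
  case (Imp a b)
  then show ?case using Imp_in_iff_worlds[OF worlds_ick_theory] by simp
next
  case (Cond a b)
  have G: "ick_theory \<Gamma> G" using worlds_ick_theory[OF Cond.prems] .
  have a: "{z\<in>worlds. sat worlds (\<subseteq>) canon_rel canon_val z a} = extension a"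
    using Cond.IH(1) unfolding extension_def by blast
  have "sat worlds (\<subseteq>) canon_rel canon_val G (Cond a b) \<longleftrightarrow>
      (\<forall>D. canon_rel (extension a) G D \<longrightarrow> sat worlds (\<subseteq>) canon_rel canon_val D b)"
    by (simp only: sat.simps a)
  also have "\<dots> \<longleftrightarrow> (\<forall>D\<in>cond_succs G a. b \<in> D)"
    unfolding canon_rel_indexed[OF Cond.prems extension_indexed_by[OF G]]
    using Cond.IH(2) unfolding cond_succs_def by blast
  also have "\<dots> \<longleftrightarrow> cond_succs G a \<subseteq> extension b"
    unfolding extension_def cond_succs_def by blast
  also have "\<dots> \<longleftrightarrow> Cond a b \<in> G"
    by (rule cond_succs_subset_extension_iff[OF G])
  finally show ?case .
qed

lemma completeness:
  assumes valid: "\<forall>(W :: form set set) le R. cautious_frame W le R \<longrightarrow> valid_in W le R \<phi>"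
  shows "\<phi> \<in> ICK_ext \<Gamma>"
proof (rule ccontr)
  assume "\<phi> \<notin> ICK_ext \<Gamma>"
  then obtain P where P: "P \<in> worlds" "\<phi> \<notin> P"
    using prime_theory_extension[OF ick_theory_ICK_ext] unfolding worlds_def by blast
  then have "valid_in worlds (\<subseteq>) canon_rel \<phi>"
    using valid canonical_cautious_frame by blast
  then have "sat worlds (\<subseteq>) canon_rel canon_val P \<phi>"
    using canon_val_upset P(1) unfolding valid_in_def by blast
  then show False using truth_lemma[OF P(1)] P(2) by blast
qed

end

lemma cautious_logic_CC_axioms: "cautious_logic CC_axioms"
  by unfold_locales (blast intro: ICK_ext.gam)

theorem iCC_complete:
  "(\<forall>(W :: form set set) le R. cautious_frame W le R \<longrightarrow> valid_in W le R \<phi>) \<Longrightarrow> \<phi> \<in> iCC"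
  unfolding iCC_eq_ICK_ext by (rule cautious_logic.completeness[OF cautious_logic_CC_axioms])

theorem theorem6p7:
  "(\<forall>\<phi> (W :: 'w set) le R. \<phi> \<in> iCC \<longrightarrow> cautious_frame W le R \<longrightarrow> valid_in W le R \<phi>)
   \<and> (\<forall>\<phi>. (\<forall>(W :: form set set) le R. cautious_frame W le R \<longrightarrow> valid_in W le R \<phi>)
          \<longrightarrow> \<phi> \<in> iCC)"
  using iCC_sound iCC_complete by blast

end
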